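(* Let $m\ge5$ with $m\equiv1\pmod4$, let $N=3^m-1$ and $v=\frac{3^m-1}{2}-3^{(m-1)/2}-1$. Then $\gcd(v,N)=1$, and for every integer $i$ with $0\le i\le\frac{3^{(m-1)/2}-1}{4}$, the $3$-weight of $v(1+2i)\bmod N$ is congruent to $3$ modulo $4$ (i.e. the $3$-adic digit vector of $v(1+2i)\bmod N$ lies in $S_3(m)$).
   Context: For an integer $i$, $i\bmod N$ is the unique $s\in\{0,\dots,N-1\}$ with $N\mid i-s$. For $0\le s\le 3^m-1$ with $3$-adic expansion $s=\sum_{j=0}^{m-1}s_j3^j$, $s_j\in\{0,1,2\}$, the $3$-weight is $\mathrm{wt}_3(s)=\sum_j s_j$. $S_j(m)=\{(i_0,\dots,i_{m-1})\in\{0,1,2\}^m:\sum i_k\equiv j\pmod 4\}$. *)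

theory Defs
  imports Main
begin

definition digit3 :: "nat \<Rightarrow> nat \<Rightarrow> nat" where
  "digit3 s j = s div 3 ^ j mod 3"

definition wt3 :: "nat \<Rightarrow> nat \<Rightarrow> nat" where
  "wt3 m s = (\<Sum>j<m. digit3 s j)"

end

theory Submission
  imports Defs
begin

(* Write m = 2k + 1 and K = 3^k, so that K mod 4 = 1, N = 3K^2 - 1 and v = N/2 - K - 1.
   Since 2v = N - 2(K + 1), v(1 + 2i) is congruent to v - 2i(K + 1) modulo N; for 4i < K - 1
   this residue is (K + r) K + r with r = (K - 3)/2 - 2i odd and r < K.  Its 3-adic digits
   are those of r twice plus one digit 1, so its weight is 2 wt(r) + 1, and wt(r) is odd
   because 3 is odd and hence wt(r) and r have the same parity.  For the last index
   4i = K - 1 the residue is (K - 2) K + (K - 1), of weight (2k - 1) + 2k.  Finally, a common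
   divisor of v and N divides 2(K + 1) and 3K^2 - 1, hence 4, while v is odd. *)

lemma wt3_Suc: "wt3 (Suc n) s = s mod 3 + wt3 n (s div 3)"
proof -
  have "digit3 s (Suc j) = digit3 (s div 3) j" for j
    by (simp add: digit3_def div_mult2_eq)
  then show ?thesis
    unfolding wt3_def sum.lessThan_Suc_shift by (simp add: digit3_def)
qed

lemma wt3_Suc_digit:
  assumes "d < 3"
  shows "wt3 (Suc n) (3 * x + d) = d + wt3 n x"
  using assms by (simp add: wt3_Suc)

lemma wt3_add_mult_power:
  assumes "r < 3 ^ k"
  shows "wt3 (k + n) (q * 3 ^ k + r) = wt3 k r + wt3 n q"
  using assms
proof (induction k arbitrary: r)
  case 0
  then show ?case by (simp add: wt3_def)
next
  case (Suc k)
  have "(q * 3 ^ Suc k + r) mod 3 = r mod 3" "(q * 3 ^ Suc k + r) div 3 = q * 3 ^ k + r div 3"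
    by (simp_all add: mult.commute[of 3] mult.assoc[symmetric])
  moreover have "r div 3 < 3 ^ k"
    using Suc.prems by (simp add: less_mult_imp_div_less mult.commute)
  ultimately show ?case
    using Suc.IH by (simp add: wt3_Suc)
qed

lemma wt3_mod_2:
  assumes "s < 3 ^ n"
  shows "wt3 n s mod 2 = s mod 2"
  using assms
proof (induction n arbitrary: s)
  case 0
  then show ?case by (simp add: wt3_def)
next
  case (Suc n)
  have "s div 3 < 3 ^ n"
    using Suc.prems by (simp add: less_mult_imp_div_less mult.commute)
  moreover have "s = (s mod 3 + s div 3) + 2 * (s div 3)"
    by simp
  then have "s mod 2 = (s mod 3 + s div 3) mod 2"
    by (metis mod_mult_self2)
  ultimately show ?case
    using Suc.IH by (metis wt3_Suc mod_add_right_eq)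
qed

lemma wt3_power_minus_1: "wt3 k (3 ^ k - 1) = 2 * k"
proof (induction k)
  case 0
  then show ?case by (simp add: wt3_def)
next
  case (Suc k)
  have "(1::nat) \<le> 3 ^ k"
    by simp
  then have "(3::nat) ^ Suc k - 1 = 3 * (3 ^ k - 1) + 2"
    unfolding power_Suc by linarith
  then show ?case
    using Suc.IH wt3_Suc_digit[of 2 k "3 ^ k - 1"] by simp
qed

lemma wt3_power_minus_2:
  assumes "k \<ge> 1"
  shows "wt3 k (3 ^ k - 2) = 2 * k - 1"
proof -
  obtain j where k: "k = Suc j"
    using assms by (cases k) auto
  have "(1::nat) \<le> 3 ^ j"
    by simp
  then have "(3::nat) ^ Suc j - 2 = 3 * (3 ^ j - 1) + 1"
    unfolding power_Suc by linarith
  then show ?thesis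
    using wt3_power_minus_1[of j] wt3_Suc_digit[of 1 j "3 ^ j - 1"] by (simp add: k)
qed

lemma wt3_doubled_block_mod_4:
  assumes "odd r" and "r < 3 ^ k"
  shows "wt3 (k + Suc k) ((3 ^ k + r) * 3 ^ k + r) mod 4 = 3"
proof -
  have "wt3 (k + Suc k) ((3 ^ k + r) * 3 ^ k + r) = wt3 k r + wt3 (Suc k) (3 ^ k + r)"
    using assms(2) by (rule wt3_add_mult_power)
  also have "wt3 (Suc k) (3 ^ k + r) = wt3 k r + 1"
    using wt3_add_mult_power[OF assms(2), of 1 1] by (simp add: wt3_def digit3_def)
  finally show ?thesis
    using wt3_mod_2[OF assms(2)] assms(1) by presburger
qed

lemma wt3_power_minus_2_block_power_minus_1:
  assumes "k \<ge> 1"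
  shows "wt3 (k + Suc k) ((3 ^ k - 2) * 3 ^ k + (3 ^ k - 1)) = 4 * k - 1"
proof -
  have "wt3 (k + Suc k) ((3 ^ k - 2) * 3 ^ k + (3 ^ k - 1))
      = wt3 k (3 ^ k - 1) + wt3 (Suc k) (3 ^ k - 2)"
    by (rule wt3_add_mult_power) simp
  also have "wt3 (Suc k) (3 ^ k - 2) = wt3 k (3 ^ k - 2)"
    using wt3_add_mult_power[of "3 ^ k - 2" k 1 0] by (simp add: wt3_def digit3_def)
  finally show ?thesis
    using assms wt3_power_minus_1[of k] wt3_power_minus_2[OF assms] by simp
qed

lemma exponent_decomposition:
  fixes m :: nat
  assumes "m \<ge> 5" and "m mod 4 = 1"
  obtains k b where "m = k + Suc k" and "(3::nat) ^ k = 4 * b + 5"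
proof -
  obtain t where m: "m = 4 * t + 1"
    using assms(2) by (metis div_mult_mod_eq mult.commute)
  then have "t \<ge> 1"
    using assms(1) by simp
  have "(9::nat) ^ t mod 4 = 1"
    using power_mod[of "9::nat" 4 t] by simp
  moreover have "(9::nat) ^ t \<ge> 9"
    using \<open>t \<ge> 1\<close> power_increasing[of 1 t "9::nat"] by simp
  ultimately have "\<exists>b. (9::nat) ^ t = 4 * b + 5"
    by presburger
  then obtain b where "(9::nat) ^ t = 4 * b + 5" ..
  then have "(3::nat) ^ (2 * t) = 4 * b + 5"
    by (simp add: power_mult)
  moreover have "m = 2 * t + Suc (2 * t)"
    using m by simp
  ultimately show thesis
    using that by blast
qed

(* In the following, 4b + 5 stands for K = 3^k: then N = 48b^2 + 120b + 74 and
   v = 24b^2 + 56b + 31. *)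

lemma gcd_v_N: "gcd (24*b*b + 56*b + 31) (48*b*b + 120*b + 74 :: nat) = 1"
proof -
  define d where "d = gcd (24*b*b + 56*b + 31) (48*b*b + 120*b + 74 :: nat)"
  have "(12*b + 10) * (48*b*b + 120*b + 74) + 4 = (24*b + 24) * (24*b*b + 56*b + 31 :: nat)"
    by (simp add: algebra_simps)
  moreover have "d dvd (12*b + 10) * (48*b*b + 120*b + 74)" "d dvd (24*b + 24) * (24*b*b + 56*b + 31)"
    by (simp_all add: d_def)
  ultimately have "d dvd 4"
    by (metis dvd_add_right_iff)
  moreover have "odd (24*b*b + 56*b + 31 :: nat)"
    by simp
  then have "odd d"
    unfolding d_def by (meson dvd_trans gcd_dvd1)
  moreover have "d \<le> 4"
    using \<open>d dvd 4\<close> by (simp add: dvd_imp_le)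
  then have "d = 0 \<or> d = 1 \<or> d = 2 \<or> d = 3 \<or> d = 4"
    by arith
  ultimately have "d = 1"
    by auto
  then show ?thesis
    by (simp add: d_def)
qed

lemma v_mult_odd_mod_N:
  fixes b c i :: nat
  assumes "b = i + c"
  shows "(24*b*b + 56*b + 31) * (1 + 2*i) mod (48*b*b + 120*b + 74)
    = (4*b + 5 + (2*c + 1)) * (4*b + 5) + (2*c + 1)"
proof -
  have "(24*b*b + 56*b + 31) * (1 + 2*i)
      = (4*b + 5 + (2*c + 1)) * (4*b + 5) + (2*c + 1) + i * (48*b*b + 120*b + 74)"
    using assms by (simp add: algebra_simps)
  moreover have "(4*b + 5 + (2*c + 1)) * (4*b + 5) \<le> (6*b + 6) * (4*b + 5)"
    using assms by (intro mult_le_mono1) simp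
  then have "(4*b + 5 + (2*c + 1)) * (4*b + 5) + (2*c + 1) < 48*b*b + 120*b + 74"
    using assms by (simp add: algebra_simps)
  ultimately show ?thesis
    by (simp only: mod_mult_self1 mod_less)
qed

lemma v_mult_last_odd_mod_N:
  fixes b :: nat
  shows "(24*b*b + 56*b + 31) * (1 + 2*(b + 1)) mod (48*b*b + 120*b + 74)
    = (4*b + 3) * (4*b + 5) + (4*b + 4)"
proof -
  have "(24*b*b + 56*b + 31) * (1 + 2*(b + 1))
      = (4*b + 3) * (4*b + 5) + (4*b + 4) + (b + 1) * (48*b*b + 120*b + 74)"
    by (simp add: algebra_simps)
  moreover have "(4*b + 3) * (4*b + 5) + (4*b + 4) < 48*b*b + 120*b + 74"
    by (simp add: algebra_simps)
  ultimately show ?thesis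
    by (simp only: mod_mult_self1 mod_less)
qed

lemma wt3_v_mult_odd_mod_N_mod_4:
  fixes b i k :: nat
  assumes K: "3 ^ k = 4 * b + 5" and "i \<le> b + 1"
  shows "wt3 (k + Suc k) ((24*b*b + 56*b + 31) * (1 + 2 * i) mod (48*b*b + 120*b + 74)) mod 4 = 3"
proof (cases "i \<le> b")
  case True
  then obtain c where "b = i + c"
    using le_Suc_ex by blast
  then show ?thesis
    using wt3_doubled_block_mod_4[of "2 * c + 1" k] v_mult_odd_mod_N[of b i c] by (simp add: K)
next
  case False
  then have "i = b + 1"
    using assms(2) by simp
  have "k \<ge> 1"
    using K by (cases k) auto
  have "(3::nat) ^ k - 2 = 4 * b + 3" "(3::nat) ^ k - 1 = 4 * b + 4"
    using K by simp_all
  then have "wt3 (k + Suc k) ((24*b*b + 56*b + 31) * (1 + 2 * i) mod (48*b*b + 120*b + 74))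
      = 4 * k - 1"
    using wt3_power_minus_2_block_power_minus_1[OF \<open>k \<ge> 1\<close>]
    unfolding \<open>i = b + 1\<close> v_mult_last_odd_mod_N by (simp only: K)
  moreover have "4 * k - 1 = 3 + 4 * (k - 1)"
    using \<open>k \<ge> 1\<close> by simp
  ultimately show ?thesis
    by simp
qed

theorem lemma41:
  fixes m :: nat
  assumes "m \<ge> 5" and "m mod 4 = 1"
  defines "N \<equiv> 3 ^ m - 1"
      and "v \<equiv> (3 ^ m - 1) div 2 - 3 ^ ((m - 1) div 2) - 1"
  shows "gcd v N = 1 \<and>
    (\<forall>i::nat. i \<le> (3 ^ ((m - 1) div 2) - 1) div 4 \<longrightarrow>
        wt3 m ((v * (1 + 2 * i)) mod N) mod 4 = 3)"
proof -
  obtain k b where mk: "m = k + Suc k" and K: "(3::nat) ^ k = 4 * b + 5"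
    using exponent_decomposition[OF assms(1,2)] .
  have half: "(m - 1) div 2 = k"
    using mk by simp
  have "(3::nat) ^ m = 3 * 3 ^ k * 3 ^ k"
    by (simp add: mk power_add)
  then have N': "(3::nat) ^ m - 1 = 48*b*b + 120*b + 74"
    by (simp add: K algebra_simps)
  then have N: "N = 48*b*b + 120*b + 74" and v: "v = 24*b*b + 56*b + 31"
    unfolding N_def v_def half K N' by simp_all
  have range: "((3::nat) ^ ((m - 1) div 2) - 1) div 4 = b + 1"
    unfolding half K by simp
  show ?thesis
    unfolding range
    unfolding N v mk
    using gcd_v_N[of b] wt3_v_mult_odd_mod_N_mod_4[OF K] by blast
qed

end
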